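(* For causal stable systems $P_1,P_2:\mathcal{L}_{2e+}^n\to\mathcal{L}_{2e+}^n$, the cascaded system $P=P_2P_1$ satisfies $$\theta(P)\le\theta(P_1)+\theta(P_2).$$
   Context: For $n\ge1$, $\mathcal{L}_2^n$ is the set of measurable $u:\mathbb{R}\to\mathbb{R}^n$ with $\|u\|_2^2=\int_{-\infty}^{\infty}|u(t)|^2dt<\infty$, with inner product $\langle u,v\rangle=\int u(t)^Tv(t)\,dt$; $\mathcal{L}_{2+}=\{u\in\mathcal{L}_2: u(t)=0\ \text{for}\ t<0\}$. For $T\ge0$, $(\Gamma_Tu)(t)=u(t)$ for $t\le T$ and $0$ for $t>T$; $\mathcal{L}_{2e+}=\{u: \Gamma_Tu\in\mathcal{L}_{2+}\ \forall T\ge0\}$. A system is an operator $P:\mathcal{L}_{2e+}\to\mathcal{L}_{2e+}$ with $P0=0$, $P\ne0$; it is causal if $\Gamma_TP=\Gamma_TP\Gamma_T$ for all $T\ge0$, and a causal system is stable if $Pu\in\mathcal{L}_{2+}$ for all $u\in\mathcal{L}_{2+}$ and $\sup_{0\ne u\in\mathcal{L}_{2+}}\|Pu\|_2/\|u\|_2<\infty$. The singular angle of a causal stable system $P$ is $\theta(P)\in[0,\pi]$ with $\cos\theta(P)=\inf\{\langle u,Pu\rangle/(\|u\|_2\|Pu\|_2): 0\neq u\in\mathcal{L}_{2+},\ Pu\neq0\}$. *)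

theory Defs
  imports "HOL-Analysis.Analysis"
begin

type_synonym 'n signal = "real \<Rightarrow> real ^ 'n"

definition L2 :: "'n::finite signal set" where
  "L2 = {u. u \<in> borel_measurable lborel \<and> integrable lborel (\<lambda>t. (norm (u t))\<^sup>2)}"

definition L2p :: "'n::finite signal set" where
  "L2p = {u \<in> L2. \<forall>t<0. u t = 0}"

definition trunc :: "real \<Rightarrow> 'n::finite signal \<Rightarrow> 'n signal" where
  "trunc T u = (\<lambda>t. if t \<le> T then u t else 0)"

definition L2ep :: "'n::finite signal set" where
  "L2ep = {u. \<forall>T\<ge>0. trunc T u \<in> L2p}"

definition l2_inner :: "'n::finite signal \<Rightarrow> 'n signal \<Rightarrow> real" where
  "l2_inner u v = (LINT t|lborel. u t \<bullet> v t)"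

definition l2_norm :: "'n::finite signal \<Rightarrow> real" where
  "l2_norm u = sqrt (LINT t|lborel. (norm (u t))\<^sup>2)"

definition is_system :: "('n::finite signal \<Rightarrow> 'n signal) \<Rightarrow> bool" where
  "is_system P \<longleftrightarrow> (\<forall>u\<in>L2ep. P u \<in> L2ep) \<and> P (\<lambda>_. 0) = (\<lambda>_. 0)
     \<and> (\<exists>u\<in>L2ep. \<exists>T\<ge>0. l2_norm (trunc T (P u)) \<noteq> 0)"

definition causal :: "('n::finite signal \<Rightarrow> 'n signal) \<Rightarrow> bool" where
  "causal P \<longleftrightarrow> is_system P \<and> (\<forall>T\<ge>0. \<forall>u\<in>L2ep. trunc T (P u) = trunc T (P (trunc T u)))"

definition stable :: "('n::finite signal \<Rightarrow> 'n signal) \<Rightarrow> bool" where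
  "stable P \<longleftrightarrow> causal P \<and> (\<forall>u\<in>L2p. P u \<in> L2p)
     \<and> (\<exists>c. \<forall>u\<in>L2p. l2_norm (P u) \<le> c * l2_norm u)"

definition singular_angle :: "('n::finite signal \<Rightarrow> 'n signal) \<Rightarrow> real" where
  "singular_angle P = arccos (Inf {l2_inner u (P u) / (l2_norm u * l2_norm (P u)) | u.
      u \<in> L2p \<and> l2_norm u \<noteq> 0 \<and> l2_norm (P u) \<noteq> 0})"

end

theory Submission
  imports Defs
begin

(* The angle between u and P u has cosine l2_cos u (P u), and the singular angle of P is the
   supremum of these angles. For u, v = P1 u and w = P2 v the Gram matrix of the normalised
   signals is positive semidefinite; for three unit vectors this yields the spherical triangle
   inequality angle(u, w) <= angle(u, v) + angle(v, w), and the two angles on the right are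
   bounded by the singular angles of P1 and P2. *)

lemma quadratic_form_nonneg_imp_square_le:
  fixes A B C :: real
  assumes nonneg: "\<And>a c. 0 \<le> A * a\<^sup>2 + 2 * B * a * c + C * c\<^sup>2"
  shows "B\<^sup>2 \<le> A * C"
proof (cases "A = 0")
  case True
  have "B = 0"
  proof (rule ccontr)
    assume "B \<noteq> 0"
    then show False
      using nonneg[of "- (C + 1) / (2 * B)" 1] True by (simp add: field_simps)
  qed
  with True show ?thesis by simp
next
  case False
  then have "0 < A"
    using nonneg[of 1 0] by simp
  moreover have "0 \<le> A * (A * C - B\<^sup>2)"
    using nonneg[of B "- A"] by (simp add: power2_eq_square algebra_simps)
  ultimately show ?thesis
    by (simp add: zero_le_mult_iff)
qed

(* The hypothesis says that the matrix with rows (1, x, z), (x, 1, y), (z, y, 1) is positive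
   semidefinite, i.e. that it is the Gram matrix of three unit vectors with these cosines. *)
lemma gram_arccos_triangle:
  fixes x y z :: real
  assumes gram: "\<And>a b c. 0 \<le> a\<^sup>2 + b\<^sup>2 + c\<^sup>2 + 2 * a * b * x + 2 * b * c * y + 2 * a * c * z"
  shows "arccos z \<le> arccos x + arccos y"
proof -
  have x: "-1 \<le> x" "x \<le> 1" and y: "-1 \<le> y" "y \<le> 1" and z: "-1 \<le> z" "z \<le> 1"
    using gram[of 1 1 0] gram[of 1 "-1" 0] gram[of 0 1 1] gram[of 0 1 "-1"]
      gram[of 1 0 1] gram[of 1 0 "-1"]
    by simp_all
  show ?thesis
  proof (cases "arccos x + arccos y \<le> pi")
    case False
    then show ?thesis
      using arccos_ubound[OF z] by linarith
  next
    case True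
    \<comment> \<open>Eliminating the middle vector leaves a positive semidefinite form in the outer two.\<close>
    have "0 \<le> (1 - x\<^sup>2) * a\<^sup>2 + 2 * (z - x * y) * a * c + (1 - y\<^sup>2) * c\<^sup>2" for a c
      using gram[of a "- (a * x + c * y)" c] by (simp add: power2_eq_square algebra_simps)
    then have "(z - x * y)\<^sup>2 \<le> (1 - x\<^sup>2) * (1 - y\<^sup>2)"
      by (rule quadratic_form_nonneg_imp_square_le)
    then have "\<bar>z - x * y\<bar> \<le> sqrt (1 - x\<^sup>2) * sqrt (1 - y\<^sup>2)"
      by (metis real_sqrt_abs real_sqrt_le_mono real_sqrt_mult)
    then have "cos (arccos x + arccos y) \<le> z"
      using x y by (simp add: cos_add sin_arccos)
    then have "arccos z \<le> arccos (cos (arccos x + arccos y))"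
      using z by (intro arccos_le_arccos) auto
    also have "\<dots> = arccos x + arccos y"
      using True x y by (intro arccos_cos) (auto intro: add_nonneg_nonneg arccos_lbound)
    finally show ?thesis .
  qed
qed

lemma arccos_le_arccos_Inf:
  fixes S :: "real set"
  assumes "z \<in> S" "S \<subseteq> {-1..1}"
  shows "arccos z \<le> arccos (Inf S)"
proof -
  have "bdd_below S"
    using assms(2) by (intro bdd_belowI[of _ "-1"]) auto
  then have "Inf S \<le> z"
    by (rule cInf_lower[OF assms(1)])
  moreover have "-1 \<le> Inf S"
    using assms by (intro cInf_greatest) auto
  ultimately show ?thesis
    using assms by (intro arccos_le_arccos) auto
qed

lemma arccos_Inf_le:
  fixes S :: "real set"
  assumes "S \<noteq> {}" "S \<subseteq> {-1..1}" and le: "\<And>z. z \<in> S \<Longrightarrow> arccos z \<le> M"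
  shows "arccos (Inf S) \<le> M"
proof -
  obtain z0 where "z0 \<in> S"
    using assms(1) by blast
  have Inf: "-1 \<le> Inf S" "Inf S \<le> 1"
    using assms(1,2) \<open>z0 \<in> S\<close> by (auto intro!: cInf_greatest cInf_lower2[of z0] bdd_belowI)
  have "0 \<le> M"
    using le[OF \<open>z0 \<in> S\<close>] arccos_lbound[of z0] assms(2) \<open>z0 \<in> S\<close> by force
  show ?thesis
  proof (cases "M \<le> pi")
    case False
    then show ?thesis
      using arccos_ubound[OF Inf] by linarith
  next
    case True
    have "cos M \<le> z" if "z \<in> S" for z
    proof -
      have "-1 \<le> z" "z \<le> 1"
        using that assms(2) by auto
      then have "cos M \<le> cos (arccos z)"
        using le[OF that] True \<open>0 \<le> M\<close> by (intro cos_monotone_0_pi_le) (auto intro: arccos_lbound)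
      with \<open>-1 \<le> z\<close> \<open>z \<le> 1\<close> show ?thesis
        by simp
    qed
    then have "cos M \<le> Inf S"
      using assms(1) by (intro cInf_greatest) auto
    then have "arccos (Inf S) \<le> arccos (cos M)"
      using Inf by (intro arccos_le_arccos) auto
    also have "\<dots> = M"
      using True \<open>0 \<le> M\<close> by (simp add: arccos_cos)
    finally show ?thesis .
  qed
qed

definition l2_cos :: "'n::finite signal \<Rightarrow> 'n signal \<Rightarrow> real" where
  "l2_cos u v = l2_inner u v / (l2_norm u * l2_norm v)"

lemma l2_inner_commute: "l2_inner u v = l2_inner v u"
  unfolding l2_inner_def by (simp add: inner_commute)

lemma l2_inner_self: "l2_inner u u = (l2_norm u)\<^sup>2"
  unfolding l2_inner_def l2_norm_def by (simp add: integral_nonneg power2_norm_eq_inner)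

lemma integrable_l2_inner:
  assumes "u \<in> L2" "v \<in> L2"
  shows "integrable lborel (\<lambda>t. u t \<bullet> v t)"
proof (rule Bochner_Integration.integrable_bound)
  show "integrable lborel (\<lambda>t. (norm (u t))\<^sup>2 + (norm (v t))\<^sup>2)"
    using assms unfolding L2_def by auto
  show "(\<lambda>t. u t \<bullet> v t) \<in> borel_measurable lborel"
    using assms unfolding L2_def by auto
  have "\<bar>u t \<bullet> v t\<bar> \<le> (norm (u t))\<^sup>2 + (norm (v t))\<^sup>2" for t
  proof -
    have "\<bar>u t \<bullet> v t\<bar> \<le> norm (u t) * norm (v t)"
      by (rule Cauchy_Schwarz_ineq2)
    also have "\<dots> \<le> 2 * norm (u t) * norm (v t)"
      by simp
    also have "\<dots> \<le> (norm (u t))\<^sup>2 + (norm (v t))\<^sup>2"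
      by (rule sum_squares_bound)
    finally show ?thesis .
  qed
  then show "AE t in lborel. norm (u t \<bullet> v t) \<le> norm ((norm (u t))\<^sup>2 + (norm (v t))\<^sup>2)"
    by simp
qed

lemma power2_norm_sum_scaleR:
  fixes f :: "'i \<Rightarrow> 'a::real_inner"
  shows "(norm (\<Sum>i\<in>I. a i *\<^sub>R f i))\<^sup>2 = (\<Sum>i\<in>I. \<Sum>j\<in>I. a i * a j * (f i \<bullet> f j))"
  by (simp add: power2_norm_eq_inner inner_sum_left inner_sum_right sum_distrib_left mult.assoc)
    (simp add: inner_commute)

lemma l2_gram_nonneg:
  assumes "finite I" "\<And>i. i \<in> I \<Longrightarrow> f i \<in> L2"
  shows "0 \<le> (\<Sum>i\<in>I. \<Sum>j\<in>I. a i * a j * l2_inner (f i) (f j))"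
proof -
  have int: "integrable lborel (\<lambda>t. a i * a j * (f i t \<bullet> f j t))" if "i \<in> I" "j \<in> I" for i j
    using integrable_l2_inner[OF assms(2)[OF that(1)] assms(2)[OF that(2)]] by simp
  have "0 \<le> (LINT t|lborel. (norm (\<Sum>i\<in>I. a i *\<^sub>R f i t))\<^sup>2)"
    by simp
  also have "\<dots> = (LINT t|lborel. (\<Sum>i\<in>I. \<Sum>j\<in>I. a i * a j * (f i t \<bullet> f j t)))"
    by (simp only: power2_norm_sum_scaleR)
  also have "\<dots> = (\<Sum>i\<in>I. \<Sum>j\<in>I. LINT t|lborel. a i * a j * (f i t \<bullet> f j t))"
    using int by (simp add: Bochner_Integration.integral_sum Bochner_Integration.integrable_sum)
  also have "\<dots> = (\<Sum>i\<in>I. \<Sum>j\<in>I. a i * a j * l2_inner (f i) (f j))"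
    unfolding l2_inner_def by simp
  finally show ?thesis .
qed

lemma l2_cos_gram_nonneg:
  assumes "u \<in> L2" "v \<in> L2" "w \<in> L2" "l2_norm u \<noteq> 0" "l2_norm v \<noteq> 0" "l2_norm w \<noteq> 0"
  shows "0 \<le> a\<^sup>2 + b\<^sup>2 + c\<^sup>2 + 2 * a * b * l2_cos u v + 2 * b * c * l2_cos v w + 2 * a * c * l2_cos u w"
proof -
  let ?f = "(!) [u, v, w]" and ?k = "(!) [a / l2_norm u, b / l2_norm v, c / l2_norm w]"
  have "0 \<le> (\<Sum>i<3. \<Sum>j<3. ?k i * ?k j * l2_inner (?f i) (?f j))"
    using assms(1-3) by (intro l2_gram_nonneg) (auto simp: less_Suc_eq numeral_3_eq_3)
  also have "\<dots> = a\<^sup>2 + b\<^sup>2 + c\<^sup>2 + 2 * a * b * l2_cos u v + 2 * b * c * l2_cos v w + 2 * a * c * l2_cos u w"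
    using assms(4-6)
    by (simp add: numeral_3_eq_3 l2_cos_def l2_inner_self l2_inner_commute[of v u]
        l2_inner_commute[of w u] l2_inner_commute[of w v] field_simps power2_eq_square)
  finally show ?thesis .
qed

lemma l2_cos_bounds:
  assumes "u \<in> L2" "v \<in> L2" "l2_norm u \<noteq> 0" "l2_norm v \<noteq> 0"
  shows "l2_cos u v \<in> {-1..1}"
  using l2_cos_gram_nonneg[OF assms(1,2,2,3,4,4), of 1 1 0]
    l2_cos_gram_nonneg[OF assms(1,2,2,3,4,4), of 1 "-1" 0]
  by simp

lemma arccos_l2_cos_triangle:
  assumes "u \<in> L2" "v \<in> L2" "w \<in> L2" "l2_norm u \<noteq> 0" "l2_norm v \<noteq> 0" "l2_norm w \<noteq> 0"
  shows "arccos (l2_cos u w) \<le> arccos (l2_cos u v) + arccos (l2_cos v w)"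
  using assms by (intro gram_arccos_triangle l2_cos_gram_nonneg)

lemma l2_norm_nonneg: "0 \<le> l2_norm u"
  unfolding l2_norm_def by simp

lemma L2p_imp_L2: "u \<in> L2p \<Longrightarrow> u \<in> L2"
  unfolding L2p_def by simp

lemma trunc_L2:
  assumes "u \<in> L2"
  shows "trunc T u \<in> L2"
proof -
  have "trunc T u = (\<lambda>t. indicator {..T} t *\<^sub>R u t)"
    unfolding trunc_def by (auto simp: indicator_def)
  moreover have "(\<lambda>t. indicator {..T} t *\<^sub>R u t) \<in> borel_measurable lborel"
    using assms unfolding L2_def by (intro borel_measurable_scaleR) auto
  ultimately have meas: "trunc T u \<in> borel_measurable lborel"
    by simp
  have "integrable lborel (\<lambda>t. (norm (trunc T u t))\<^sup>2)"
  proof (rule Bochner_Integration.integrable_bound)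
    show "integrable lborel (\<lambda>t. (norm (u t))\<^sup>2)"
      using assms unfolding L2_def by simp
    show "(\<lambda>t. (norm (trunc T u t))\<^sup>2) \<in> borel_measurable lborel"
      using meas by measurable
    show "AE t in lborel. norm ((norm (trunc T u t))\<^sup>2) \<le> norm ((norm (u t))\<^sup>2)"
      by (simp add: trunc_def)
  qed
  with meas show ?thesis
    unfolding L2_def by simp
qed

lemma trunc_L2p: "u \<in> L2p \<Longrightarrow> trunc T u \<in> L2p"
  unfolding L2p_def using trunc_L2 by (auto simp: trunc_def)

lemma L2p_imp_L2ep: "u \<in> L2p \<Longrightarrow> u \<in> L2ep"
  unfolding L2ep_def using trunc_L2p by blast

lemma trunc_L2ep: "u \<in> L2ep \<Longrightarrow> T \<ge> 0 \<Longrightarrow> trunc T u \<in> L2ep"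
  by (intro L2p_imp_L2ep) (simp add: L2ep_def)

lemma l2_norm_trunc_le:
  assumes "u \<in> L2"
  shows "l2_norm (trunc T u) \<le> l2_norm u"
proof -
  have "(LINT t|lborel. (norm (trunc T u t))\<^sup>2) \<le> (LINT t|lborel. (norm (u t))\<^sup>2)"
    using assms trunc_L2[OF assms] unfolding L2_def by (intro integral_mono) (auto simp: trunc_def)
  then show ?thesis
    unfolding l2_norm_def by simp
qed

lemma stable_imp_L2p: "stable P \<Longrightarrow> u \<in> L2p \<Longrightarrow> P u \<in> L2p"
  unfolding stable_def by blast

lemma stable_l2_norm_zero:
  assumes "stable P" "u \<in> L2p" "l2_norm u = 0"
  shows "l2_norm (P u) = 0"
proof -
  obtain c where "\<forall>u\<in>L2p. l2_norm (P u) \<le> c * l2_norm u"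
    using assms(1) unfolding stable_def by blast
  with assms(2,3) have "l2_norm (P u) \<le> 0"
    by force
  then show ?thesis
    using l2_norm_nonneg[of "P u"] by simp
qed

lemma causal_imp_is_system: "causal P \<Longrightarrow> is_system P"
  unfolding causal_def by blast

lemma is_system_L2ep: "is_system P \<Longrightarrow> u \<in> L2ep \<Longrightarrow> P u \<in> L2ep"
  unfolding is_system_def by blast

lemma causal_trunc: "causal P \<Longrightarrow> T \<ge> 0 \<Longrightarrow> u \<in> L2ep \<Longrightarrow> trunc T (P u) = trunc T (P (trunc T u))"
  unfolding causal_def by blast

lemma causal_comp:
  fixes P1 P2 :: "'n::finite signal \<Rightarrow> 'n signal"
  assumes "causal P1" "causal P2" "is_system (P2 \<circ> P1)"
  shows "causal (P2 \<circ> P1)"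
  unfolding causal_def
proof (intro conjI allI impI ballI)
  fix T :: real and u :: "'n signal"
  assume T: "T \<ge> 0" and u: "u \<in> L2ep"
  note P1_L2ep = is_system_L2ep[OF causal_imp_is_system[OF assms(1)]]
  have "trunc T (P2 (P1 u)) = trunc T (P2 (trunc T (P1 u)))"
    using causal_trunc[OF assms(2) T P1_L2ep[OF u]] .
  also have "trunc T (P1 u) = trunc T (P1 (trunc T u))"
    using causal_trunc[OF assms(1) T u] .
  also have "trunc T (P2 (trunc T (P1 (trunc T u)))) = trunc T (P2 (P1 (trunc T u)))"
    using causal_trunc[OF assms(2) T P1_L2ep[OF trunc_L2ep[OF u T]]] by simp
  finally show "trunc T ((P2 \<circ> P1) u) = trunc T ((P2 \<circ> P1) (trunc T u))"
    by simp
qed (fact assms(3))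

lemma stable_comp:
  assumes "stable P1" "stable P2" "is_system (P2 \<circ> P1)"
  shows "stable (P2 \<circ> P1)"
proof -
  obtain c1 where c1: "\<forall>u\<in>L2p. l2_norm (P1 u) \<le> c1 * l2_norm u"
    using assms(1) unfolding stable_def by blast
  obtain c2 where c2: "\<forall>u\<in>L2p. l2_norm (P2 u) \<le> c2 * l2_norm u"
    using assms(2) unfolding stable_def by blast
  have "l2_norm (P2 (P1 u)) \<le> (max c2 0 * c1) * l2_norm u" if "u \<in> L2p" for u
  proof -
    have "l2_norm (P2 (P1 u)) \<le> max c2 0 * l2_norm (P1 u)"
      using c2 stable_imp_L2p[OF assms(1) that] l2_norm_nonneg[of "P1 u"]
      by (meson max.cobounded1 mult_right_mono order_trans)
    also have "\<dots> \<le> max c2 0 * (c1 * l2_norm u)"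
      using c1 that by (simp add: mult_left_mono)
    finally show ?thesis
      by (simp add: mult.assoc)
  qed
  moreover have "causal (P2 \<circ> P1)"
    using assms unfolding stable_def by (blast intro: causal_comp)
  ultimately show ?thesis
    using assms unfolding stable_def by auto
qed

lemma stable_nonzero_response:
  assumes "stable P"
  obtains u where "u \<in> L2p" "l2_norm u \<noteq> 0" "l2_norm (P u) \<noteq> 0"
proof -
  have "causal P"
    using assms unfolding stable_def by blast
  then obtain u0 T where u0: "u0 \<in> L2ep" "T \<ge> 0" "l2_norm (trunc T (P u0)) \<noteq> 0"
    unfolding causal_def is_system_def by blast
  \<comment> \<open>By causality, the input truncated at time T already produces this response.\<close>
  define u where "u = trunc T u0"
  have u: "u \<in> L2p"
    using u0 unfolding u_def L2ep_def by blast
  have "l2_norm (trunc T (P u0)) = l2_norm (trunc T (P u))"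
    using causal_trunc[OF \<open>causal P\<close> u0(2,1)] unfolding u_def by simp
  also have "\<dots> \<le> l2_norm (P u)"
    using l2_norm_trunc_le L2p_imp_L2 stable_imp_L2p[OF assms u] by blast
  finally have "l2_norm (P u) \<noteq> 0"
    using u0(3) l2_norm_nonneg[of "trunc T (P u0)"] by linarith
  moreover from this have "l2_norm u \<noteq> 0"
    using stable_l2_norm_zero[OF assms u] by blast
  ultimately show ?thesis
    using u that by blast
qed

lemma singular_angle_l2_cos:
  "singular_angle P = arccos (Inf {l2_cos u (P u) | u. u \<in> L2p \<and> l2_norm u \<noteq> 0 \<and> l2_norm (P u) \<noteq> 0})"
  unfolding singular_angle_def l2_cos_def ..

lemma stable_l2_cos_bounds:
  "stable P \<Longrightarrow> {l2_cos u (P u) | u. u \<in> L2p \<and> l2_norm u \<noteq> 0 \<and> l2_norm (P u) \<noteq> 0} \<subseteq> {-1..1}"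
  using l2_cos_bounds L2p_imp_L2 stable_imp_L2p by blast

lemma arccos_l2_cos_le_singular_angle:
  assumes "stable P" "u \<in> L2p" "l2_norm u \<noteq> 0" "l2_norm (P u) \<noteq> 0"
  shows "arccos (l2_cos u (P u)) \<le> singular_angle P"
  unfolding singular_angle_l2_cos
  using assms by (intro arccos_le_arccos_Inf stable_l2_cos_bounds) auto

lemma singular_angle_le:
  assumes "stable P"
    and le: "\<And>u. u \<in> L2p \<Longrightarrow> l2_norm u \<noteq> 0 \<Longrightarrow> l2_norm (P u) \<noteq> 0 \<Longrightarrow> arccos (l2_cos u (P u)) \<le> M"
  shows "singular_angle P \<le> M"
proof -
  obtain u where "u \<in> L2p" "l2_norm u \<noteq> 0" "l2_norm (P u) \<noteq> 0"
    using stable_nonzero_response[OF assms(1)] .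
  then show ?thesis
    unfolding singular_angle_l2_cos
    using assms by (intro arccos_Inf_le stable_l2_cos_bounds) auto
qed

theorem proposition1:
  fixes P1 P2 :: "'n::finite signal \<Rightarrow> 'n signal"
  assumes "stable P1" and "stable P2"
    and "is_system (P2 \<circ> P1)"
  shows "singular_angle (P2 \<circ> P1) \<le> singular_angle P1 + singular_angle P2"
proof (rule singular_angle_le)
  show "stable (P2 \<circ> P1)"
    using assms by (rule stable_comp)
  fix u
  assume u: "u \<in> L2p" "l2_norm u \<noteq> 0" and Pu: "l2_norm ((P2 \<circ> P1) u) \<noteq> 0"
  have v: "P1 u \<in> L2p" "l2_norm (P1 u) \<noteq> 0"
    using stable_imp_L2p[OF assms(1) u(1)] stable_l2_norm_zero[OF assms(2)] Pu by auto
  have w: "P2 (P1 u) \<in> L2p"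
    using stable_imp_L2p[OF assms(2) v(1)] .
  have "arccos (l2_cos u (P2 (P1 u))) \<le> arccos (l2_cos u (P1 u)) + arccos (l2_cos (P1 u) (P2 (P1 u)))"
    using u v w Pu by (intro arccos_l2_cos_triangle) (auto intro: L2p_imp_L2)
  also have "\<dots> \<le> singular_angle P1 + singular_angle P2"
    using u v Pu assms(1,2) by (intro add_mono arccos_l2_cos_le_singular_angle) auto
  finally show "arccos (l2_cos u ((P2 \<circ> P1) u)) \<le> singular_angle P1 + singular_angle P2"
    by simp
qed

end
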